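(* For every integer $d\ge6$, the polynomial $x^d-x^{d-1}-1$ has at least two roots strictly outside the closed unit disk. Moreover, as $d\to\infty$, approximately $\frac d3$ of its roots lie outside the unit disk (the number of such roots is $(\tfrac13+o(1))d$). *)

theory Defs
  imports "HOL-Analysis.Analysis" "HOL-Computational_Algebra.Polynomial"
begin

definition trinom :: "nat \<Rightarrow> complex poly" where
  "trinom d = monom 1 d - monom 1 (d - 1) - 1"

definition outer_roots :: "nat \<Rightarrow> nat" where
  "outer_roots d = card {z::complex. poly (trinom d) z = 0 \<and> 1 < norm z}"

end

theory Submission
  imports Defs "HOL-Complex_Analysis.Weierstrass_Factorization"
begin

text \<open>
  Substituting \<open>z = 1 / w\<close> turns the roots of \<open>z^d - z^(d-1) - 1\<close> outside the unit disc into
  the solutions of \<open>w^d = 1 - w\<close> inside it. For \<open>k < d\<close>, the fixed points of the branch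
  \<open>w \<mapsto> e^(2 \<pi> i k / d) (1 - w)^(1/d)\<close> solve this equation, and distinct branches have distinct
  fixed points, so solutions in a region can be counted from below by the branches that have a
  fixed point there; these fixed points come from Brouwer's theorem.
  For \<open>1 \<le> k \<le> d/6\<close> the branch maps a lens in the upper half of the unit disc near \<open>1\<close> into
  itself; with complex conjugation this gives \<open>2 \<lfloor>d/6\<rfloor>\<close> solutions inside the disc.
  For \<open>k\<close> between about \<open>d/6\<close> and \<open>5d/6\<close> the branch maps a small disc around \<open>e^(2 \<pi> i k / d)\<close>
  into itself, where \<open>|1 - w| \<ge> 1\<close>, so its fixed point lies outside the unit disc. As there are
  at most \<open>d\<close> solutions altogether, at most about \<open>d/3\<close> of them lie inside.
\<close>

lemma inj_on_inverse: "inj_on inverse (A :: 'a::division_ring set)"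
  by (simp add: inj_on_def)

lemma norm_one_minus_squared:
  fixes z :: complex
  shows "(norm (1 - z))\<^sup>2 = 1 - 2 * Re z + (norm z)\<^sup>2"
  by (simp only: cmod_power2) (simp add: power2_eq_square algebra_simps)

lemma Im_Ln_bounds_lower_right_quadrant:
  assumes "0 < Re z" "Im z \<le> 0"
  shows "- (pi / 2) < Im (Ln z)" "Im (Ln z) \<le> 0" "Im z < 0 \<Longrightarrow> Im (Ln z) < 0"
proof -
  have "z \<noteq> 0" using assms(1) by auto
  have bound: "\<bar>Im (Ln z)\<bar> < pi / 2" using Re_Ln_pos_lt_imp[OF assms(1)] .
  then show "- (pi / 2) < Im (Ln z)" by linarith
  show "Im (Ln z) \<le> 0"
    using Im_Ln_pos_lt[OF \<open>z \<noteq> 0\<close>] bound assms(2) pi_gt_zero by linarith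
  show "Im (Ln z) < 0" if "Im z < 0"
    using Im_Ln_pos_le[OF \<open>z \<noteq> 0\<close>] bound that pi_gt_zero by linarith
qed

lemma norm_exp_Ln_div_minus_one_le:
  assumes "0 < Re z" "1 \<le> norm z" "norm z \<le> 3" "8 \<le> d"
  shows "norm (exp (Ln z / of_nat d) - 1) \<le> 6 / real d"
proof -
  have "z \<noteq> 0" using assms(1) by auto
  have "Re (Ln z) \<le> 2"
    using assms(3) ln_le_minus_one[of "norm z"] \<open>z \<noteq> 0\<close> by simp
  moreover have "0 \<le> Re (Ln z)" using assms(2) \<open>z \<noteq> 0\<close> by simp
  moreover have "\<bar>Im (Ln z)\<bar> \<le> 2" using Re_Ln_pos_lt_imp[OF assms(1)] pi_less_4 by linarith
  ultimately have "norm (Ln z) \<le> 4" using cmod_le[of "Ln z"] by linarith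
  then have small: "norm (Ln z / of_nat d) \<le> 4 / real d"
    using assms(4) by (simp add: norm_divide divide_right_mono)
  also have "4 / real d \<le> 1 / 2" using assms(4) by (simp add: field_simps)
  finally have "norm (exp (Ln z / of_nat d) - 1) \<le> 3 / 2 * norm (Ln z / of_nat d)"
    by (rule norm_exp_bounds(2))
  also have "\<dots> \<le> 6 / real d" using small by simp
  finally show ?thesis .
qed

lemma sin_ge_cubic:
  fixes x :: real
  assumes "0 \<le> x"
  shows "x - x ^ 3 / 6 \<le> sin x"
proof -
  have "(\<Sum>m<3. sin_coeff m * x ^ m) = x"
    by (simp add: sin_coeff_def numeral_3_eq_3 lessThan_Suc)
  then have "\<bar>sin x - x\<bar> \<le> inverse (fact 3) * \<bar>x\<bar> ^ 3"
    using Maclaurin_sin_bound[of x 3] by simp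
  then have "\<bar>sin x - x\<bar> \<le> x ^ 3 / 6" using assms by (simp add: fact_numeral)
  then show ?thesis unfolding abs_le_iff by linarith
qed

lemma cos_le_cos_between:
  assumes "0 \<le> a" "a \<le> t" "t \<le> 2 * pi - a"
  shows "cos t \<le> cos a"
proof (cases "t \<le> pi")
  case True
  then show ?thesis using assms by (intro cos_monotone_0_pi_le) auto
next
  case False
  then have "cos (2 * pi - t) \<le> cos a" using assms by (intro cos_monotone_0_pi_le) auto
  then show ?thesis by (simp add: cos_diff)
qed

lemma tendsto_div_of_bounded_deviation:
  fixes a :: "nat \<Rightarrow> real"
  assumes "eventually (\<lambda>n. \<bar>a n - c * real n\<bar> \<le> B) sequentially"
  shows "(\<lambda>n. a n / real n) \<longlonglongrightarrow> c"
proof -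
  have "eventually (\<lambda>n. norm (a n / real n - c) \<le> B / real n) sequentially"
    using assms eventually_gt_at_top[of 0]
  proof eventually_elim
    case (elim n)
    then have "a n / real n - c = (a n - c * real n) / real n" by (simp add: field_simps)
    with elim show ?case by (simp add: abs_divide divide_right_mono)
  qed
  moreover have "(\<lambda>n. B / real n) \<longlonglongrightarrow> 0"
    by (rule lim_const_over_n)
  ultimately have "(\<lambda>n. a n / real n - c) \<longlonglongrightarrow> 0" by (rule Lim_null_comparison)
  then show ?thesis by (rule LIM_zero_cancel)
qed

section \<open>The reciprocal equation\<close>

lemma poly_trinom: "0 < d \<Longrightarrow> poly (trinom d) z = z ^ d - z ^ (d - 1) - 1"
  by (simp add: trinom_def poly_monom)

lemma trinom_ne_0: "0 < d \<Longrightarrow> trinom d \<noteq> 0"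
proof
  assume "0 < d" "trinom d = 0"
  then have "poly (trinom d) 0 = 0" by simp
  with \<open>0 < d\<close> show False by (simp add: poly_trinom power_0_left split: if_splits)
qed

lemma degree_trinom_le: "degree (trinom d) \<le> d"
  unfolding trinom_def
  by (intro degree_diff_le) (auto intro: order.trans[OF degree_monom_le])

definition reciprocal_roots :: "nat \<Rightarrow> complex set" where
  "reciprocal_roots d = {w. w ^ d = 1 - w}"

lemma zero_notin_reciprocal_roots: "0 < d \<Longrightarrow> 0 \<notin> reciprocal_roots d"
  by (cases d) (auto simp: reciprocal_roots_def)

lemma trinom_root_inverse_iff:
  assumes "0 < d" "w \<noteq> 0"
  shows "poly (trinom d) (inverse w) = 0 \<longleftrightarrow> w ^ d = 1 - w"
proof -
  obtain m where m: "d = Suc m" using assms(1) by (cases d) auto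
  have "w ^ d * poly (trinom d) (inverse w)
      = (w * inverse w) ^ d - w * (w * inverse w) ^ m - w ^ d"
    by (simp add: poly_trinom m power_mult_distrib algebra_simps)
  also have "\<dots> = 1 - w - w ^ d" using assms(2) by simp
  finally have eq: "w ^ d * poly (trinom d) (inverse w) = 1 - w - w ^ d" .
  have "w ^ d \<noteq> 0" using assms(2) by simp
  then have "poly (trinom d) (inverse w) = 0 \<longleftrightarrow> 1 - w - w ^ d = 0"
    using eq by (metis mult_eq_0_iff)
  also have "\<dots> \<longleftrightarrow> w ^ d = 1 - w" by auto
  finally show ?thesis .
qed

lemma trinom_roots_eq_inverse_image:
  assumes "0 < d"
  shows "{z. poly (trinom d) z = 0} = inverse ` reciprocal_roots d"
proof (intro set_eqI iffI)
  fix z assume z: "z \<in> {z. poly (trinom d) z = 0}"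
  have "poly (trinom d) 0 \<noteq> 0"
    using assms by (simp add: poly_trinom power_0_left split: if_splits)
  with z have "z \<noteq> 0" by auto
  with z have "inverse z \<in> reciprocal_roots d"
    using trinom_root_inverse_iff[OF assms, of "inverse z"] by (simp add: reciprocal_roots_def)
  then show "z \<in> inverse ` reciprocal_roots d"
    by (intro image_eqI[where x = "inverse z"]) simp_all
next
  fix z assume "z \<in> inverse ` reciprocal_roots d"
  then obtain w where w: "w \<in> reciprocal_roots d" "z = inverse w" by blast
  moreover have "w \<noteq> 0" using w zero_notin_reciprocal_roots[OF assms] by auto
  ultimately show "z \<in> {z. poly (trinom d) z = 0}"
    using trinom_root_inverse_iff[OF assms] by (simp add: reciprocal_roots_def)
qed

lemma finite_reciprocal_roots:
  assumes "0 < d"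
  shows "finite (reciprocal_roots d)"
proof -
  have "finite (inverse ` reciprocal_roots d)"
    using poly_roots_finite[OF trinom_ne_0[OF assms]]
    by (simp only: trinom_roots_eq_inverse_image[OF assms])
  then show ?thesis by (rule finite_imageD) (rule inj_on_inverse)
qed

lemma card_reciprocal_roots_le:
  assumes "0 < d"
  shows "card (reciprocal_roots d) \<le> d"
proof -
  have "card (reciprocal_roots d) = card {z. poly (trinom d) z = 0}"
    by (simp add: trinom_roots_eq_inverse_image[OF assms] card_image inj_on_inverse)
  also have "\<dots> \<le> d"
    using card_poly_roots_bound[OF trinom_ne_0[OF assms]] degree_trinom_le by (rule order.trans)
  finally show ?thesis .
qed

lemma outer_roots_eq_card_reciprocal_roots_in_disc:
  assumes "0 < d"
  shows "outer_roots d = card {w \<in> reciprocal_roots d. norm w < 1}"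
proof -
  have "1 < norm (inverse w) \<longleftrightarrow> norm w < 1" if "w \<in> reciprocal_roots d" for w
    using zero_notin_reciprocal_roots[OF assms] that
    by (auto simp: norm_inverse one_less_inverse_iff)
  then have "{z \<in> inverse ` reciprocal_roots d. 1 < norm z}
      = inverse ` {w \<in> reciprocal_roots d. norm w < 1}"
    by blast
  moreover have "{z. poly (trinom d) z = 0 \<and> 1 < norm z}
      = {z \<in> {z. poly (trinom d) z = 0}. 1 < norm z}"
    by simp
  ultimately show ?thesis
    unfolding outer_roots_def trinom_roots_eq_inverse_image[OF assms]
    by (simp add: card_image inj_on_inverse)
qed

lemma card_reciprocal_roots_in_disc_add_outside_le:
  assumes "0 < d"
  shows "card {w \<in> reciprocal_roots d. norm w < 1} + card {w \<in> reciprocal_roots d. 1 \<le> norm w} \<le> d"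
proof -
  have "card {w \<in> reciprocal_roots d. norm w < 1} + card {w \<in> reciprocal_roots d. 1 \<le> norm w}
      = card (reciprocal_roots d)"
    using finite_reciprocal_roots[OF assms]
    by (subst card_Un_disjoint[symmetric]) (auto intro: finite_subset arg_cong[where f = card])
  then show ?thesis using card_reciprocal_roots_le[OF assms] by simp
qed

lemma double_card_upper_reciprocal_roots_in_disc_le:
  assumes "0 < d"
  shows "2 * card {w \<in> reciprocal_roots d. norm w < 1 \<and> 0 < Im w}
       \<le> card {w \<in> reciprocal_roots d. norm w < 1}"
proof -
  define U where "U = {w \<in> reciprocal_roots d. norm w < 1 \<and> 0 < Im w}"
  define R where "R = {w \<in> reciprocal_roots d. norm w < 1}"
  have fin: "finite R"
    using finite_reciprocal_roots[OF assms] by (rule rev_finite_subset) (auto simp: R_def)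
  have "cnj ` U \<subseteq> R"
    by (auto simp: U_def R_def reciprocal_roots_def simp flip: complex_cnj_power)
  then have "U \<union> cnj ` U \<subseteq> R" by (auto simp: U_def R_def)
  moreover have "U \<inter> cnj ` U = {}" by (auto simp: U_def)
  moreover have "card (cnj ` U) = card U" by (simp add: card_image inj_on_def)
  moreover have "finite U" using fin by (rule rev_finite_subset) (auto simp: U_def R_def)
  ultimately have "card U + card U \<le> card R"
    by (metis card_Un_disjoint card_mono fin finite_imageI)
  then show ?thesis by (simp add: U_def R_def)
qed

section \<open>Branches of the \<open>d\<close>-th root of \<open>1 - w\<close>\<close>

definition root_branch :: "nat \<Rightarrow> nat \<Rightarrow> complex \<Rightarrow> complex" where
  "root_branch d k w = cis (2 * pi * real k / real d) * exp (Ln (1 - w) / of_nat d)"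

lemma root_branch_polar:
  "root_branch d k w
     = rcis (exp (Re (Ln (1 - w)) / real d)) (2 * pi * real k / real d + Im (Ln (1 - w)) / real d)"
  by (simp add: root_branch_def rcis_def exp_eq_polar[of "Ln (1 - w) / of_nat d"] cis_mult
      algebra_simps)

lemma root_branch_power:
  assumes "0 < d" "w \<noteq> 1"
  shows "root_branch d k w ^ d = 1 - w"
proof -
  have "real d * (2 * pi * real k / real d) = 2 * pi * real k"
    using assms(1) by simp
  then have "cis (2 * pi * real k / real d) ^ d = 1"
    by (simp only: Complex.DeMoivre) simp
  moreover have "exp (Ln (1 - w) / of_nat d) ^ d = 1 - w"
    using assms by (simp flip: exp_of_nat_mult)
  ultimately show ?thesis by (simp add: root_branch_def power_mult_distrib)
qed

lemma root_branch_inj: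
  assumes "0 < d" "k < d" "j < d" "root_branch d k w = root_branch d j w"
  shows "k = j"
proof -
  have "cis (2 * pi * real k / real d) = cis (2 * pi * real j / real d)"
    using assms(4) by (simp add: root_branch_def)
  then show ?thesis
    using Complex.bij_betw_roots_unity[OF assms(1)] assms(2,3) by (auto simp: bij_betw_def inj_on_def)
qed

lemma continuous_on_root_branch:
  assumes "0 < d" "\<And>w. w \<in> K \<Longrightarrow> Re w < 1"
  shows "continuous_on K (root_branch d k)"
proof -
  have "1 - w \<notin> \<real>\<^sub>\<le>\<^sub>0" if "w \<in> K" for w
    using assms(2)[OF that] by (auto simp: complex_nonpos_Reals_iff)
  with assms(1) show ?thesis unfolding root_branch_def by (intro continuous_intros) auto
qed

lemma card_le_card_reciprocal_roots_if_fixed_points: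
  assumes "0 < d" "S \<subseteq> {..<d}"
    and fixed: "\<And>k. k \<in> S \<Longrightarrow> \<exists>w. root_branch d k w = w \<and> w \<noteq> 1 \<and> P w"
  shows "card S \<le> card {w \<in> reciprocal_roots d. P w}"
proof -
  obtain f where f: "\<And>k. k \<in> S \<Longrightarrow> root_branch d k (f k) = f k \<and> f k \<noteq> 1 \<and> P (f k)"
    using fixed by metis
  have "inj_on f S"
  proof (rule inj_onI)
    fix k j assume k: "k \<in> S" and j: "j \<in> S" and "f k = f j"
    then have "root_branch d k (f k) = root_branch d j (f k)"
      using f[OF k] f[OF j] by simp
    with k j assms(1,2) show "k = j" by (intro root_branch_inj) auto
  qed
  moreover have "f ` S \<subseteq> {w \<in> reciprocal_roots d. P w}"
  proof
    fix w assume "w \<in> f ` S"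
    then obtain k where k: "k \<in> S" and w: "w = f k" by blast
    show "w \<in> {w \<in> reciprocal_roots d. P w}"
      using f[OF k] root_branch_power[OF assms(1), of "f k" k] by (simp add: w reciprocal_roots_def)
  qed
  moreover have "finite {w \<in> reciprocal_roots d. P w}"
    using finite_reciprocal_roots[OF assms(1)] by (rule rev_finite_subset) auto
  ultimately show ?thesis by (rule card_inj_on_le)
qed

section \<open>Fixed points inside the unit disc\<close>

definition lens :: "real \<Rightarrow> complex set" where
  "lens c = cball 0 1 \<inter> cball 1 1 \<inter> {w. 0 \<le> Im w} \<inter> {w. Re w \<le> c}"

lemma rcis_mem_lens:
  assumes "0 \<le> r" "r \<le> 1" "0 \<le> a" "a \<le> t" "t \<le> pi / 3"
  shows "rcis r t \<in> lens (cos a)"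
proof -
  have "1 / 2 \<le> cos t"
    using cos_monotone_0_pi_le[of t "pi / 3"] assms cos_60 by simp
  have "(norm (1 - rcis r t))\<^sup>2 = 1 - 2 * (r * cos t) + r\<^sup>2"
    using norm_one_minus_squared[of "rcis r t"] assms(1) by simp
  also have "\<dots> \<le> 1"
  proof -
    have "r\<^sup>2 \<le> r" using assms(1,2) by (simp add: power2_eq_square mult_left_le_one_le)
    also have "r \<le> 2 * (r * cos t)"
      using \<open>1 / 2 \<le> cos t\<close> mult_left_mono[of 1 "2 * cos t" r] assms(1) by simp
    finally show ?thesis by simp
  qed
  finally have "norm (1 - rcis r t) \<le> 1" by (simp add: power2_le_imp_le)
  moreover have "0 \<le> Im (rcis r t)" using assms sin_ge_zero[of t] by simp
  moreover have "r * cos t \<le> cos a"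
  proof -
    have "r * cos t \<le> cos t" using assms(1,2) \<open>1 / 2 \<le> cos t\<close> by (simp add: mult_left_le_one_le)
    also have "\<dots> \<le> cos a" using assms by (intro cos_monotone_0_pi_le) auto
    finally show ?thesis .
  qed
  ultimately show ?thesis
    using assms(1,2) by (simp add: lens_def dist_norm norm_minus_commute)
qed

lemma compact_lens: "compact (lens c)"
  unfolding lens_def
  by (intro compact_Int_closed compact_Int compact_cball closed_halfspace_Im_ge closed_halfspace_Re_le)

lemma convex_lens: "convex (lens c)"
  unfolding lens_def by (intro convex_Int convex_cball convex_halfspace_Im_ge convex_halfspace_Re_le)

lemma root_branch_angle_bounds_on_lens:
  assumes k: "1 \<le> k" "6 * k \<le> d" and w: "w \<in> lens (cos (3 * pi / (2 * real d)))"
  defines "t \<equiv> 2 * pi * real k / real d + Im (Ln (1 - w)) / real d"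
  shows "Re w < 1" "Re (Ln (1 - w)) \<le> 0"
    and "3 * pi / (2 * real d) < t" "t \<le> pi / 3" "0 < Im w \<Longrightarrow> t < pi / 3"
proof -
  have dr: "6 \<le> real d" and kr: "1 \<le> real k" "6 * real k \<le> real d" using k by simp_all
  have "cos (3 * pi / (2 * real d)) < 1"
    using cos_monotone_0_pi[of 0 "3 * pi / (2 * real d)"] dr by (simp add: field_simps)
  then show "Re w < 1" using w by (simp add: lens_def)
  have "norm (1 - w) \<le> 1" "0 \<le> Im w" using w by (auto simp: lens_def dist_norm)
  moreover have "1 - w \<noteq> 0" using \<open>Re w < 1\<close> by auto
  ultimately show "Re (Ln (1 - w)) \<le> 0" by simp
  note Ln_bounds = Im_Ln_bounds_lower_right_quadrant[of "1 - w"]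
  have "- (pi / 2) / real d < Im (Ln (1 - w)) / real d"
    using Ln_bounds \<open>Re w < 1\<close> \<open>0 \<le> Im w\<close> dr by (intro divide_strict_right_mono) auto
  moreover have "3 * pi / (2 * real d) + pi / (2 * real d) \<le> 2 * pi * real k / real d"
    using dr kr by (simp add: field_simps)
  ultimately show "3 * pi / (2 * real d) < t" unfolding t_def by simp
  have "2 * pi * real k / real d \<le> pi / 3" using dr kr by (simp add: field_simps)
  moreover have "Im (Ln (1 - w)) / real d \<le> 0"
    using Ln_bounds \<open>Re w < 1\<close> \<open>0 \<le> Im w\<close> dr by (intro divide_nonpos_pos) auto
  ultimately show "t \<le> pi / 3" unfolding t_def by linarith
  show "t < pi / 3" if "0 < Im w"
  proof -
    have "Im (Ln (1 - w)) / real d < 0"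
      using Ln_bounds \<open>Re w < 1\<close> that dr by (intro divide_neg_pos) auto
    with \<open>2 * pi * real k / real d \<le> pi / 3\<close> show ?thesis unfolding t_def by linarith
  qed
qed

lemma root_branch_fixed_point_inside_disc:
  assumes k: "1 \<le> k" "6 * k \<le> d"
  obtains w where "root_branch d k w = w" "norm w < 1" "0 < Im w"
proof -
  have dr: "6 \<le> real d" using k by simp
  define a where "a = 3 * pi / (2 * real d)"
  define r where "r w = exp (Re (Ln (1 - w)) / real d)" for w
  define t where "t w = 2 * pi * real k / real d + Im (Ln (1 - w)) / real d" for w
  have polar: "root_branch d k w = rcis (r w) (t w)" for w
    by (simp add: root_branch_polar r_def t_def)
  have a: "0 < a" "a \<le> pi / 3" using dr by (auto simp: a_def field_simps)
  have bounds: "Re w < 1 \<and> r w \<le> 1 \<and> a < t w \<and> t w \<le> pi / 3 \<and> (0 < Im w \<longrightarrow> t w < pi / 3)"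
    if "w \<in> lens (cos a)" for w
    using root_branch_angle_bounds_on_lens[OF k that[unfolded a_def]] dr
    by (auto simp: a_def r_def t_def divide_nonpos_pos)
  have maps: "root_branch d k \<in> lens (cos a) \<rightarrow> lens (cos a)"
  proof
    fix w assume "w \<in> lens (cos a)"
    note bounds_w = bounds[OF this]
    show "root_branch d k w \<in> lens (cos a)"
      unfolding polar using bounds_w a by (intro rcis_mem_lens) (auto simp: r_def)
  qed
  have cont: "continuous_on (lens (cos a)) (root_branch d k)"
    using bounds dr by (intro continuous_on_root_branch) auto
  have "lens (cos a) \<noteq> {}"
    using rcis_mem_lens[of "1 / 2" a a] a by auto
  then obtain w where w: "w \<in> lens (cos a)" and fixed: "root_branch d k w = w"
    using brouwer[OF compact_lens convex_lens _ cont maps] by blast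
  note bounds = bounds[OF w]
  then have "w \<noteq> 1" by auto
  then have root: "w ^ d = 1 - w"
    using root_branch_power[of d w k] fixed dr by simp
  have w_polar: "Re w = r w * cos (t w)" "Im w = r w * sin (t w)" "norm w = r w"
    using arg_cong[OF polar[of w, unfolded fixed], of Re] arg_cong[OF polar[of w, unfolded fixed], of Im]
      arg_cong[OF polar[of w, unfolded fixed], of norm]
    by (simp_all add: r_def)
  have "0 < Im w"
    using bounds a sin_gt_zero[of "t w"] w_polar by (simp add: r_def)
  then have "1 / 2 < cos (t w)"
    using bounds a cos_monotone_0_pi[of "t w" "pi / 3"] cos_60 by simp
  have "norm w < 1"
  proof (rule ccontr)
    assume "\<not> norm w < 1"
    then have "norm w = 1" using bounds w_polar by simp
    then have "norm (1 - w) = 1" by (simp flip: root add: norm_power)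
    with \<open>norm w = 1\<close> show False
      using norm_one_minus_squared[of w] \<open>1 / 2 < cos (t w)\<close> w_polar by simp
  qed
  with fixed \<open>0 < Im w\<close> show ?thesis using that by blast
qed

section \<open>Fixed points outside the unit disc\<close>

lemma cos_middle_branch_angle_le:
  assumes d: "24 \<le> d" and k: "real d / 6 + 3 \<le> real k" "real k \<le> 5 * real d / 6 - 3"
  shows "cos (2 * pi * real k / real d) \<le> 1 / 2 - 12 / real d"
proof -
  have dr: "24 \<le> real d" using d by simp
  define \<eta> where "\<eta> = 6 * pi / real d"
  have \<eta>: "18 / real d \<le> \<eta>" "\<eta> \<le> 1"
    using dr pi_gt3 pi_less_4 by (auto simp: \<eta>_def field_simps)
  have "pi / 3 + \<eta> \<le> 2 * pi * real k / real d"
  proof -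
    have "2 * pi * real k / real d - (pi / 3 + \<eta>) = 2 * pi / real d * (real k - real d / 6 - 3)"
      using dr by (simp add: \<eta>_def field_simps)
    moreover have "0 \<le> 2 * pi / real d * (real k - real d / 6 - 3)" using k by simp
    ultimately show ?thesis by linarith
  qed
  moreover have "2 * pi * real k / real d \<le> 2 * pi - (pi / 3 + \<eta>)"
  proof -
    have "2 * pi - (pi / 3 + \<eta>) - 2 * pi * real k / real d
        = 2 * pi / real d * (5 * real d / 6 - 3 - real k)"
      using dr by (simp add: \<eta>_def field_simps)
    moreover have "0 \<le> 2 * pi / real d * (5 * real d / 6 - 3 - real k)" using k by simp
    ultimately show ?thesis by linarith
  qed
  ultimately have "cos (2 * pi * real k / real d) \<le> cos (pi / 3 + \<eta>)"
    using \<eta> pi_gt_zero by (intro cos_le_cos_between) (auto simp: \<eta>_def)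
  also have "\<dots> = cos \<eta> / 2 - sqrt 3 / 2 * sin \<eta>"
    by (simp add: cos_add cos_60 sin_60)
  also have "\<dots> \<le> 1 / 2 - 12 / real d"
  proof -
    have "1.7 \<le> sqrt 3" by (rule real_le_rsqrt) (simp add: power2_eq_square)
    moreover have "5 / 6 * \<eta> \<le> sin \<eta>"
    proof -
      have "0 \<le> \<eta>" using dr by (simp add: \<eta>_def)
      moreover have "\<eta> ^ 3 \<le> \<eta> ^ 1" using \<open>0 \<le> \<eta>\<close> \<eta> by (intro power_decreasing) auto
      ultimately show ?thesis using sin_ge_cubic[of \<eta>] by simp
    qed
    ultimately have "1.7 / 2 * (5 / 6 * (18 / real d)) \<le> sqrt 3 / 2 * sin \<eta>"
      using \<eta> dr by (intro mult_mono) auto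
    moreover have "12 / real d \<le> 1.7 / 2 * (5 / 6 * (18 / real d))" using dr by (simp add: field_simps)
    ultimately show ?thesis using cos_le_one[of \<eta>] by linarith
  qed
  finally show ?thesis .
qed

lemma cball_near_unit_circle_bounds:
  assumes \<omega>: "norm \<omega> = 1" "Re \<omega> \<le> 1 / 2 - 2 * \<rho>" and \<rho>: "0 < \<rho>" "\<rho> \<le> 1 / 4"
    and w: "w \<in> cball \<omega> \<rho>"
  shows "Re w < 1" "1 \<le> norm (1 - w)" "norm (1 - w) \<le> 3"
proof -
  have near: "norm (w - \<omega>) \<le> \<rho>" using w by (simp add: dist_norm norm_minus_commute)
  have "Re w - Re \<omega> \<le> \<rho>" using abs_Re_le_cmod[of "w - \<omega>"] near by simp
  then show "Re w < 1" using \<omega> \<rho> by linarith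
  have "(1 + \<rho>)\<^sup>2 \<le> 1 + 4 * \<rho>" using \<rho> by (simp add: power2_eq_square algebra_simps)
  also have "\<dots> \<le> 2 - 2 * Re \<omega>" using \<omega> by simp
  also have "\<dots> = (norm (1 - \<omega>))\<^sup>2" using norm_one_minus_squared[of \<omega>] \<omega> by simp
  finally have "1 + \<rho> \<le> norm (1 - \<omega>)" by (rule power2_le_imp_le) simp
  moreover have "norm (1 - \<omega>) \<le> norm (1 - w) + norm (w - \<omega>)"
    using norm_triangle_ineq[of "1 - w" "w - \<omega>"] by simp
  ultimately show "1 \<le> norm (1 - w)" using near by linarith
  have "norm (1 - w) \<le> 1 + norm w" using norm_triangle_ineq4[of 1 w] by simp
  moreover have "norm w \<le> norm \<omega> + norm (w - \<omega>)" using norm_triangle_ineq[of \<omega> "w - \<omega>"] by simp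
  ultimately show "norm (1 - w) \<le> 3" using \<omega> near \<rho> by linarith
qed

lemma root_branch_fixed_point_outside_disc:
  assumes d: "24 \<le> d" and cos: "cos (2 * pi * real k / real d) \<le> 1 / 2 - 12 / real d"
  obtains w where "root_branch d k w = w" "w \<noteq> 1" "1 \<le> norm w"
proof -
  define \<rho> where "\<rho> = 6 / real d"
  define \<omega> where "\<omega> = cis (2 * pi * real k / real d)"
  have \<rho>: "0 < \<rho>" "\<rho> \<le> 1 / 4" using d by (auto simp: \<rho>_def field_simps)
  have \<omega>: "norm \<omega> = 1" "Re \<omega> \<le> 1 / 2 - 2 * \<rho>" using cos by (simp_all add: \<omega>_def \<rho>_def)
  note bounds = cball_near_unit_circle_bounds[OF \<omega> \<rho>]
  have maps: "root_branch d k \<in> cball \<omega> \<rho> \<rightarrow> cball \<omega> \<rho>"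
  proof
    fix w assume w: "w \<in> cball \<omega> \<rho>"
    have "dist \<omega> (root_branch d k w) = norm (\<omega> * (1 - exp (Ln (1 - w) / of_nat d)))"
      by (simp add: root_branch_def \<omega>_def dist_norm algebra_simps)
    also have "\<dots> = norm (exp (Ln (1 - w) / of_nat d) - 1)"
      by (simp add: norm_mult \<omega> norm_minus_commute)
    also have "\<dots> \<le> \<rho>"
      unfolding \<rho>_def using bounds[OF w] d by (intro norm_exp_Ln_div_minus_one_le) auto
    finally show "root_branch d k w \<in> cball \<omega> \<rho>" by simp
  qed
  have cont: "continuous_on (cball \<omega> \<rho>) (root_branch d k)"
    using bounds d by (intro continuous_on_root_branch) auto
  obtain w where w: "w \<in> cball \<omega> \<rho>" and fixed: "root_branch d k w = w"
    using brouwer_ball[OF \<rho>(1) cont maps] .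
  have "w \<noteq> 1" using bounds(1)[OF w] by auto
  then have root: "w ^ d = 1 - w"
    using root_branch_power[of d w k] fixed d by simp
  have "1 \<le> norm w"
  proof (rule ccontr)
    assume "\<not> 1 \<le> norm w"
    then have "norm w ^ d < 1" using d by (simp add: power_less_one_iff)
    with bounds(2)[OF w] show False by (simp flip: root add: norm_power)
  qed
  with fixed \<open>w \<noteq> 1\<close> show ?thesis using that by blast
qed

section \<open>Counting the roots\<close>

lemma outer_roots_ge:
  assumes "6 \<le> d"
  shows "2 * (d div 6) \<le> outer_roots d"
proof -
  have "0 < d" using assms by simp
  have "d div 6 = card {1..d div 6}" by simp
  also have "\<dots> \<le> card {w \<in> reciprocal_roots d. norm w < 1 \<and> 0 < Im w}"
  proof (rule card_le_card_reciprocal_roots_if_fixed_points[OF \<open>0 < d\<close>])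
    show "{1..d div 6} \<subseteq> {..<d}" using assms by auto
  next
    fix k assume "k \<in> {1..d div 6}"
    then have "1 \<le> k" "6 * k \<le> d" by auto
    then obtain w where "root_branch d k w = w" "norm w < 1" "0 < Im w"
      by (rule root_branch_fixed_point_inside_disc)
    then show "\<exists>w. root_branch d k w = w \<and> w \<noteq> 1 \<and> norm w < 1 \<and> 0 < Im w" by auto
  qed
  finally have "2 * (d div 6) \<le> 2 * card {w \<in> reciprocal_roots d. norm w < 1 \<and> 0 < Im w}"
    by simp
  also have "\<dots> \<le> outer_roots d"
    using double_card_upper_reciprocal_roots_in_disc_le[OF \<open>0 < d\<close>]
    by (simp add: outer_roots_eq_card_reciprocal_roots_in_disc[OF \<open>0 < d\<close>])
  finally show ?thesis .
qed

lemma outer_roots_le: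
  assumes "24 \<le> d"
  shows "outer_roots d + card {d div 6 + 4 .. d - (d div 6 + 4)} \<le> d"
proof -
  have "0 < d" using assms by simp
  have "real d \<le> 6 * real (d div 6) + 5"
    using div_mult_mod_eq[of d 6] mod_less[of "d mod 6" 6] by linarith
  then have d6: "real d / 6 - 1 \<le> real (d div 6)" by simp
  have "card {d div 6 + 4 .. d - (d div 6 + 4)} \<le> card {w \<in> reciprocal_roots d. 1 \<le> norm w}"
  proof (rule card_le_card_reciprocal_roots_if_fixed_points[OF \<open>0 < d\<close>])
    show "{d div 6 + 4 .. d - (d div 6 + 4)} \<subseteq> {..<d}" by auto
  next
    fix k assume "k \<in> {d div 6 + 4 .. d - (d div 6 + 4)}"
    then have "real (d div 6) + 4 \<le> real k" "real k + real (d div 6) + 4 \<le> real d"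
      by (auto simp flip: of_nat_add)
    then have "real d / 6 + 3 \<le> real k" "real k \<le> 5 * real d / 6 - 3"
      using d6 by linarith+
    then have "cos (2 * pi * real k / real d) \<le> 1 / 2 - 12 / real d"
      using assms by (intro cos_middle_branch_angle_le)
    with assms obtain w where "root_branch d k w = w" "w \<noteq> 1" "1 \<le> norm w"
      by (rule root_branch_fixed_point_outside_disc)
    then show "\<exists>w. root_branch d k w = w \<and> w \<noteq> 1 \<and> 1 \<le> norm w" by auto
  qed
  then show ?thesis
    using card_reciprocal_roots_in_disc_add_outside_le[OF \<open>0 < d\<close>]
    by (simp add: outer_roots_eq_card_reciprocal_roots_in_disc[OF \<open>0 < d\<close>])
qed

lemma outer_roots_near_third:
  assumes "24 \<le> d"
  shows "\<bar>real (outer_roots d) - 1 / 3 * real d\<bar> \<le> 7"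
proof -
  have "card {d div 6 + 4 .. d - (d div 6 + 4)} + 2 * (d div 6) + 7 = d"
    using assms by simp
  then have "outer_roots d \<le> 2 * (d div 6) + 7"
    using outer_roots_le[OF assms] by linarith
  moreover have "2 * (d div 6) \<le> outer_roots d" using assms by (intro outer_roots_ge) simp
  moreover have "6 * (d div 6) \<le> d" "d \<le> 6 * (d div 6) + 5" by presburger+
  ultimately have "d \<le> 3 * outer_roots d + 5" "3 * outer_roots d \<le> d + 21" by linarith+
  then show ?thesis by linarith
qed

theorem mainTheorem14:
  shows "(\<forall>d::nat. 6 \<le> d \<longrightarrow> 2 \<le> outer_roots d) \<and>
         (\<lambda>d. real (outer_roots d) / real d) \<longlonglongrightarrow> 1 / 3"
proof
  show "\<forall>d::nat. 6 \<le> d \<longrightarrow> 2 \<le> outer_roots d"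
  proof (intro allI impI)
    fix d :: nat assume "6 \<le> d"
    then have "2 \<le> 2 * (d div 6)" by simp
    also have "\<dots> \<le> outer_roots d" using \<open>6 \<le> d\<close> by (rule outer_roots_ge)
    finally show "2 \<le> outer_roots d" .
  qed
  show "(\<lambda>d. real (outer_roots d) / real d) \<longlonglongrightarrow> 1 / 3"
    by (intro tendsto_div_of_bounded_deviation[where B = 7] eventually_sequentiallyI[of 24]
        outer_roots_near_third)
qed

end
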